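(* Let $g:\mathcal A_{\mathbf X}\to\mathbb R$ satisfy $g(x)-g(y)\le S_c(y,x)$ for all $x,y\in\mathcal A_{\mathbf X}$. Then $$v(x)=\min\{g(y)+S_c(y,x):y\in\mathcal A_{\mathbf X}\},\qquad x\in\mathbf V,$$ is the unique solution of $(DFE_c)$ on $\mathbf V$ which coincides with $g$ on $\mathcal A_{\mathbf X}$.
   Context: Network $\Gamma$ (finite arcs $\mathcal E$ closed under inversion $\tilde\gamma(s)=\gamma(1-s)$, vertices $\mathbf V$, connected), Hamiltonians $H_\gamma$ continuous, coercive, quasiconvex with $\mathrm{Int}\{H_\gamma(s,\cdot)\le b\}=\{H_\gamma(s,\cdot)<b\}$, $H_{\tilde\gamma}(s,p)=H_\gamma(1-s,-p)$; $a_\gamma=\max_s\min_pH_\gamma$, $c_\gamma$ = least level admitting a periodic viscosity subsolution, $a_0=\max\{\max_{\gamma\text{ not closed}}a_\gamma,\max_{\gamma\text{ closed}}c_\gamma\}$, $\min_pH_\gamma(s,p)$ constant in $s$ whenever $a_\gamma=a_0$. Graph $\mathbf X=(\mathbf V,\mathbf E)$, bijection $\Psi:\mathbf E\to\mathcal E$, $\mathrm o(e)=\Psi(e)(0)$, $\mathrm t(e)=\Psi(e)(1)$, $-e=\Psi^{-1}(\widetilde{\Psi(e)})$, $\mathbf E_x=\{e:\mathrm o(e)=x\}$, $\sigma_a(e)=\int_0^1\max\{p:H_{\Psi(e)}(t,p)=a\}dt$. Paths $\xi=(e_1,\dots,e_M)$, $M\ge 1$, $\mathrm t(e_j)=\mathrm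 o(e_{j+1})$; cycles: $\mathrm t(e_M)=\mathrm o(e_1)$; incident on $y$ if some $e_i$ has $y$ as endpoint; $\sigma_a(\xi)=\sum\sigma_a(e_i)$; $S_a(x,y)=\inf\{\sigma_a(\xi):\xi$ path linking $x$ to $y\}$. $(DFE_a)$: $u(x)=\min_{e\in\mathbf E_x}(u(\mathrm t(e))+\sigma_a(-e))$, $x\in\mathbf V$; subsolution: $u(\mathrm t(e))-u(\mathrm o(e))\le\sigma_a(e)$ $\forall e$. Critical value $c=\min\{a\ge a_0:(DFE_a)$ has a subsolution$\}$. Projected Aubry set: $\mathcal A_{\mathbf X}=\{y\in\mathbf V:$ there is a cycle $\xi$ incident on $y$ with $\sigma_c(\xi)=0\}$ (it is nonempty). *)

theory Defs
  imports "HOL-Analysis.Analysis"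
begin

text \<open>Abstract graph X = (V, E): edges of type 'e, vertices of type 'v.
  og e = o(e) (origin), tm e = t(e) (terminal), rv e = -e (reversed edge).
  The Hamiltonian of the arc Psi(e) is H e :: real => real => real, H e s p.\<close>

definition is_path :: "'e set \<Rightarrow> ('e \<Rightarrow> 'v) \<Rightarrow> ('e \<Rightarrow> 'v) \<Rightarrow> 'e list \<Rightarrow> bool" where
  "is_path E og tm xs \<longleftrightarrow> xs \<noteq> [] \<and> set xs \<subseteq> E \<and>
     (\<forall>i. Suc i < length xs \<longrightarrow> tm (xs ! i) = og (xs ! Suc i))"

definition path_links :: "'e set \<Rightarrow> ('e \<Rightarrow> 'v) \<Rightarrow> ('e \<Rightarrow> 'v) \<Rightarrow> 'e list \<Rightarrow> 'v \<Rightarrow> 'v \<Rightarrow> bool" where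
  "path_links E og tm xs x y \<longleftrightarrow> is_path E og tm xs \<and> og (hd xs) = x \<and> tm (last xs) = y"

definition is_cycle :: "'e set \<Rightarrow> ('e \<Rightarrow> 'v) \<Rightarrow> ('e \<Rightarrow> 'v) \<Rightarrow> 'e list \<Rightarrow> bool" where
  "is_cycle E og tm xs \<longleftrightarrow> is_path E og tm xs \<and> tm (last xs) = og (hd xs)"

definition incident :: "('e \<Rightarrow> 'v) \<Rightarrow> ('e \<Rightarrow> 'v) \<Rightarrow> 'e list \<Rightarrow> 'v \<Rightarrow> bool" where
  "incident og tm xs y \<longleftrightarrow> (\<exists>e\<in>set xs. og e = y \<or> tm e = y)"

definition minH :: "('e \<Rightarrow> real \<Rightarrow> real \<Rightarrow> real) \<Rightarrow> 'e \<Rightarrow> real \<Rightarrow> real" where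
  "minH H e s = Inf (range (H e s))"

definition a_arc :: "('e \<Rightarrow> real \<Rightarrow> real \<Rightarrow> real) \<Rightarrow> 'e \<Rightarrow> real" where
  "a_arc H e = Sup ((\<lambda>s. minH H e s) ` {0..1})"

definition periodic_visc_subsol :: "('e \<Rightarrow> real \<Rightarrow> real \<Rightarrow> real) \<Rightarrow> 'e \<Rightarrow> real \<Rightarrow> (real \<Rightarrow> real) \<Rightarrow> bool" where
  "periodic_visc_subsol H e a u \<longleftrightarrow> continuous_on {0..1} u \<and> u 0 = u 1 \<and>
     (\<forall>s \<in> {0<..<1}. \<forall>\<phi> d. (\<phi> has_real_derivative d) (at s) \<longrightarrow>
        (\<exists>\<epsilon>>0. \<forall>r. r \<in> {0<..<1} \<and> \<bar>r - s\<bar> < \<epsilon> \<longrightarrow> u r - \<phi> r \<le> u s - \<phi> s) \<longrightarrow>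
        H e s d \<le> a)"

definition c_arc :: "('e \<Rightarrow> real \<Rightarrow> real \<Rightarrow> real) \<Rightarrow> 'e \<Rightarrow> real" where
  "c_arc H e = Inf {a. \<exists>u. periodic_visc_subsol H e a u}"

definition a_zero :: "'e set \<Rightarrow> ('e \<Rightarrow> 'v) \<Rightarrow> ('e \<Rightarrow> 'v) \<Rightarrow> ('e \<Rightarrow> real \<Rightarrow> real \<Rightarrow> real) \<Rightarrow> real" where
  "a_zero E og tm H = Max ({a_arc H e | e. e \<in> E \<and> og e \<noteq> tm e} \<union>
                            {c_arc H e | e. e \<in> E \<and> og e = tm e})"

definition sigma :: "('e \<Rightarrow> real \<Rightarrow> real \<Rightarrow> real) \<Rightarrow> real \<Rightarrow> 'e \<Rightarrow> real" where
  "sigma H a e = integral {0..1} (\<lambda>t. Sup {p. H e t p = a})"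

definition sigma_path :: "('e \<Rightarrow> real \<Rightarrow> real \<Rightarrow> real) \<Rightarrow> real \<Rightarrow> 'e list \<Rightarrow> real" where
  "sigma_path H a xs = sum_list (map (sigma H a) xs)"

definition S_dist :: "'e set \<Rightarrow> ('e \<Rightarrow> 'v) \<Rightarrow> ('e \<Rightarrow> 'v) \<Rightarrow> ('e \<Rightarrow> real \<Rightarrow> real \<Rightarrow> real)
    \<Rightarrow> real \<Rightarrow> 'v \<Rightarrow> 'v \<Rightarrow> real" where
  "S_dist E og tm H a x y = Inf {sigma_path H a xs | xs. path_links E og tm xs x y}"

definition DFE_subsol :: "'e set \<Rightarrow> ('e \<Rightarrow> 'v) \<Rightarrow> ('e \<Rightarrow> 'v) \<Rightarrow> ('e \<Rightarrow> real \<Rightarrow> real \<Rightarrow> real)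
    \<Rightarrow> real \<Rightarrow> ('v \<Rightarrow> real) \<Rightarrow> bool" where
  "DFE_subsol E og tm H a u \<longleftrightarrow> (\<forall>e\<in>E. u (tm e) - u (og e) \<le> sigma H a e)"

definition DFE_sol :: "'v set \<Rightarrow> 'e set \<Rightarrow> ('e \<Rightarrow> 'v) \<Rightarrow> ('e \<Rightarrow> 'v) \<Rightarrow> ('e \<Rightarrow> 'e)
    \<Rightarrow> ('e \<Rightarrow> real \<Rightarrow> real \<Rightarrow> real) \<Rightarrow> real \<Rightarrow> ('v \<Rightarrow> real) \<Rightarrow> bool" where
  "DFE_sol V E og tm rv H a u \<longleftrightarrow>
     (\<forall>x\<in>V. u x = Min ((\<lambda>e. u (tm e) + sigma H a (rv e)) ` {e\<in>E. og e = x}))"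

definition critical_value :: "'e set \<Rightarrow> ('e \<Rightarrow> 'v) \<Rightarrow> ('e \<Rightarrow> 'v) \<Rightarrow> ('e \<Rightarrow> real \<Rightarrow> real \<Rightarrow> real) \<Rightarrow> real \<Rightarrow> bool" where
  "critical_value E og tm H c \<longleftrightarrow>
     (c \<ge> a_zero E og tm H \<and> (\<exists>u. DFE_subsol E og tm H c u) \<and>
      (\<forall>a. a \<ge> a_zero E og tm H \<and> (\<exists>u. DFE_subsol E og tm H a u) \<longrightarrow> c \<le> a))"

definition aubry :: "'v set \<Rightarrow> 'e set \<Rightarrow> ('e \<Rightarrow> 'v) \<Rightarrow> ('e \<Rightarrow> 'v) \<Rightarrow> ('e \<Rightarrow> real \<Rightarrow> real \<Rightarrow> real) \<Rightarrow> real \<Rightarrow> 'v set" where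
  "aubry V E og tm H c = {y\<in>V. \<exists>xs. is_cycle E og tm xs \<and> incident og tm xs y \<and> sigma_path H c xs = 0}"

definition network :: "'v set \<Rightarrow> 'e set \<Rightarrow> ('e \<Rightarrow> 'v) \<Rightarrow> ('e \<Rightarrow> 'v) \<Rightarrow> ('e \<Rightarrow> 'e)
    \<Rightarrow> ('e \<Rightarrow> real \<Rightarrow> real \<Rightarrow> real) \<Rightarrow> bool" where
  "network V E og tm rv H \<longleftrightarrow>
     finite E \<and> E \<noteq> {} \<and> V = og ` E \<and>
     (\<forall>e\<in>E. rv e \<in> E \<and> rv (rv e) = e \<and> rv e \<noteq> e \<and> og (rv e) = tm e) \<and>
     (\<forall>x\<in>V. \<forall>y\<in>V. x \<noteq> y \<longrightarrow> (\<exists>xs. path_links E og tm xs x y)) \<and>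
     (\<forall>e\<in>E.
        continuous_on ({0..1} \<times> UNIV) (\<lambda>(s, p). H e s p) \<and>
        (\<forall>b. \<exists>R. \<forall>s\<in>{0..1}. \<forall>p. \<bar>p\<bar> > R \<longrightarrow> H e s p > b) \<and>
        (\<forall>s\<in>{0..1}. \<forall>b. convex {p. H e s p \<le> b}) \<and>
        (\<forall>s\<in>{0..1}. \<forall>b. interior {p. H e s p \<le> b} = {p. H e s p < b}) \<and>
        (\<forall>s\<in>{0..1}. \<forall>p. H (rv e) s p = H e (1 - s) (- p)) \<and>
        (a_arc H e = a_zero E og tm H \<longrightarrow> (\<exists>m. \<forall>s\<in>{0..1}. minH H e s = m)))"

end

theory Submission
  imports Defs
begin

text \<open>Once some subsolution exists, \<open>S_dist\<close> is a genuine minimum-weight distance. For a base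
  point \<open>y\<close> of the Aubry set \<open>S y y = 0\<close>, and a last-edge decomposition of optimal paths shows
  that \<open>S y\<close> itself solves the discrete equation. Solutions are exactly subsolutions admitting
  at every vertex an incoming edge on which the subsolution inequality is tight, and this
  description is stable under finite minima, so the proposed formula is a solution; it
  reproduces \<open>g\<close> on the Aubry set by the compatibility hypothesis. Conversely, following tight
  edges backwards from any vertex of a solution \<open>u\<close> must close a loop in the finite graph;
  that loop has weight zero, hence lies in the Aubry set, which gives \<open>u x \<ge> u z + S z x\<close> for
  some \<open>z\<close> in the Aubry set, while \<open>u x \<le> u z + S z x\<close> holds for every \<open>z\<close>.\<close>

lemma path_links_iff:
  "path_links E og tm xs x y \<longleftrightarrow> xs \<noteq> [] \<and> set xs \<subseteq> E \<and>
     successively (\<lambda>e f. tm e = og f) xs \<and> og (hd xs) = x \<and> tm (last xs) = y"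
  unfolding path_links_def is_path_def successively_conv_nth by auto

lemma path_links_single: "e \<in> E \<Longrightarrow> path_links E og tm [e] (og e) (tm e)"
  by (simp add: path_links_iff)

lemma path_links_append:
  "path_links E og tm p x y \<Longrightarrow> path_links E og tm q y z \<Longrightarrow> path_links E og tm (p @ q) x z"
  by (auto simp: path_links_iff successively_append_iff)

lemma path_links_snocD:
  "path_links E og tm (p @ [e]) x y \<Longrightarrow> p \<noteq> [] \<Longrightarrow> path_links E og tm p x (og e)"
  by (auto simp: path_links_iff successively_append_iff)

lemma path_links_rotate:
  assumes "path_links E og tm (p @ q) x x" and "q \<noteq> []"
  shows "path_links E og tm (q @ p) (og (hd q)) (og (hd q))"
  using assms by (cases "p = []") (auto simp: path_links_iff successively_append_iff)

lemma cycle_incident_og: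
  assumes cycle: "is_cycle E og tm xs" and "incident og tm xs y"
  shows "\<exists>f\<in>set xs. og f = y"
proof -
  obtain k where k: "k < length xs" and "og (xs ! k) = y \<or> tm (xs ! k) = y"
    using assms(2) unfolding incident_def by (metis in_set_conv_nth)
  then consider "og (xs ! k) = y" | "tm (xs ! k) = y" by blast
  then show ?thesis
  proof cases
    case 1
    then show ?thesis using nth_mem[OF k] by blast
  next
    case 2
    show ?thesis
    proof (cases "Suc k < length xs")
      case True
      then have "og (xs ! Suc k) = y" using cycle 2 unfolding is_cycle_def is_path_def by auto
      then show ?thesis using nth_mem[OF True] by blast
    next
      case False
      then have len: "length xs = Suc k" using k by simp
      then have "xs \<noteq> []" by auto
      then have "last xs = xs ! k" using len by (simp add: last_conv_nth)
      then have "og (hd xs) = y" using cycle 2 unfolding is_cycle_def by simp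
      moreover have "hd xs \<in> set xs" using \<open>xs \<noteq> []\<close> by simp
      ultimately show ?thesis by blast
    qed
  qed
qed

lemma cycle_rotate_to_incident:
  assumes "is_cycle E og tm xs" and "incident og tm xs y"
  shows "\<exists>ys. path_links E og tm ys y y \<and> sigma_path H a ys = sigma_path H a xs"
proof -
  obtain f where "f \<in> set xs" "og f = y" using cycle_incident_og[OF assms] by blast
  then obtain p q where xs: "xs = p @ f # q" by (meson split_list)
  have "path_links E og tm (p @ f # q) (og (hd xs)) (og (hd xs))"
    using assms(1) xs unfolding is_cycle_def path_links_def by simp
  from path_links_rotate[OF this] have "path_links E og tm ((f # q) @ p) y y"
    using \<open>og f = y\<close> by simp
  moreover have "sigma_path H a ((f # q) @ p) = sigma_path H a xs"
    by (simp add: xs sigma_path_def)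
  ultimately show ?thesis by blast
qed

lemma subsol_le_sigma_path:
  assumes "DFE_subsol E og tm H a w" and "path_links E og tm p x y"
  shows "w y - w x \<le> sigma_path H a p"
  using assms(2)
proof (induction p arbitrary: x)
  case Nil
  then show ?case by (simp add: path_links_iff)
next
  case (Cons e p)
  have edge: "w (tm e) - w x \<le> sigma H a e"
    using assms(1) Cons.prems by (auto simp: path_links_iff DFE_subsol_def)
  show ?case
  proof (cases "p = []")
    case True
    then show ?thesis using edge Cons.prems by (simp add: path_links_iff sigma_path_def)
  next
    case False
    then have "path_links E og tm p (tm e) y"
      using Cons.prems by (auto simp: path_links_iff successively_Cons)
    then have "w y - w (tm e) \<le> sigma_path H a p" by (rule Cons.IH)
    then show ?thesis using edge by (simp add: sigma_path_def)
  qed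
qed

lemma walk_path_links:
  assumes walk: "\<And>k. w k \<in> E \<and> tm (w k) = X k \<and> og (w k) = X (Suc k)" and "i < j"
  shows "path_links E og tm (rev (map w [i..<j])) (X j) (X i)"
  using \<open>i < j\<close>
proof (induction j)
  case (Suc j)
  have edge: "path_links E og tm [w j] (X (Suc j)) (X j)"
    using path_links_single[of "w j" E og tm] walk[of j] by simp
  show ?case
  proof (cases "i = j")
    case False
    then have "path_links E og tm ([w j] @ rev (map w [i..<j])) (X (Suc j)) (X i)"
      using Suc by (intro path_links_append[OF edge]) simp
    then show ?thesis using Suc.prems by simp
  qed (use edge in simp)
qed simp

lemma tight_walk_segment:
  assumes walk: "\<And>k. w k \<in> E \<and> tm (w k) = X k \<and> og (w k) = X (Suc k)"
    and tight: "\<And>k. u (X (Suc k)) + sigma H a (w k) \<le> u (X k)" and "i < j"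
  shows "path_links E og tm (rev (map w [i..<j])) (X j) (X i)"
    and "sigma_path H a (rev (map w [i..<j])) \<le> u (X i) - u (X j)"
proof -
  show "path_links E og tm (rev (map w [i..<j])) (X j) (X i)"
    using walk_path_links[where w = w and X = X, OF walk \<open>i < j\<close>] .
  have "sigma_path H a (rev (map w [i..<j])) = (\<Sum>k = i..<j. sigma H a (w k))"
    by (simp add: sigma_path_def rev_map[symmetric] sum_list_rev interv_sum_list_conv_sum_set_nat)
  also have "\<dots> \<le> (\<Sum>k = i..<j. u (X k) - u (X (Suc k)))"
    using tight by (intro sum_mono) (simp add: algebra_simps)
  also have "\<dots> = u (X i) - u (X j)"
    using sum_Suc_diff'[of i j "\<lambda>k. - u (X k)"] \<open>i < j\<close> by simp
  finally show "sigma_path H a (rev (map w [i..<j])) \<le> u (X i) - u (X j)" .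
qed

lemma finite_range_repeats:
  fixes X :: "nat \<Rightarrow> 'a"
  assumes "finite (range X)"
  obtains i j where "i < j" and "X i = X j"
proof -
  have "\<not> inj X" using finite_imageD[OF assms] by blast
  then obtain i j where "i \<noteq> j" "X i = X j" unfolding inj_def by blast
  then show ?thesis using that nat_neq_iff by metis
qed

locale network_graph =
  fixes V :: "'v set" and E :: "'e set" and og tm :: "'e \<Rightarrow> 'v" and rv :: "'e \<Rightarrow> 'e"
    and H :: "'e \<Rightarrow> real \<Rightarrow> real \<Rightarrow> real"
  assumes network: "network V E og tm rv H"
begin

lemma finite_E: "finite E"
  using network unfolding network_def by (elim conjE) assumption

lemma V_eq: "V = og ` E"
  using network unfolding network_def by (elim conjE) assumption

lemma reversal: "\<forall>e\<in>E. rv e \<in> E \<and> rv (rv e) = e \<and> rv e \<noteq> e \<and> og (rv e) = tm e"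
  using network unfolding network_def by (elim conjE) assumption

lemma strongly_connected: "\<forall>x\<in>V. \<forall>y\<in>V. x \<noteq> y \<longrightarrow> (\<exists>p. path_links E og tm p x y)"
  using network unfolding network_def by (elim conjE) assumption

lemma rv_in_E: "e \<in> E \<Longrightarrow> rv e \<in> E" and rv_rv: "e \<in> E \<Longrightarrow> rv (rv e) = e"
  and og_rv: "e \<in> E \<Longrightarrow> og (rv e) = tm e"
  using reversal by blast+

lemma tm_rv: "e \<in> E \<Longrightarrow> tm (rv e) = og e"
  using og_rv[OF rv_in_E] rv_rv by metis

lemma finite_V: "finite V"
  using finite_E V_eq by simp

lemma og_in_V: "e \<in> E \<Longrightarrow> og e \<in> V"
  using V_eq by auto

lemma tm_in_V: "e \<in> E \<Longrightarrow> tm e \<in> V"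
  using og_in_V[OF rv_in_E] og_rv by metis

lemma aubry_subset: "aubry V E og tm H a \<subseteq> V"
  unfolding aubry_def by auto

lemma finite_aubry: "finite (aubry V E og tm H a)"
  using finite_subset[OF aubry_subset finite_V] .

lemma zero_loop_in_aubry:
  assumes loop: "path_links E og tm p z z" and "sigma_path H a p = 0" and "z \<in> V"
  shows "z \<in> aubry V E og tm H a"
proof -
  have "is_cycle E og tm p" using loop unfolding is_cycle_def path_links_def by simp
  moreover have "incident og tm p z"
    using loop unfolding incident_def path_links_iff by (metis last_in_set)
  ultimately show ?thesis using assms(2,3) unfolding aubry_def by blast
qed

lemma ex_path_links: "x \<in> V \<Longrightarrow> y \<in> V \<Longrightarrow> \<exists>p. path_links E og tm p x y"
proof (cases "x = y")
  case True
  assume "x \<in> V"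
  then obtain e where e: "e \<in> E" "og e = x" using V_eq by auto
  have "path_links E og tm ([e] @ [rv e]) (og e) (tm (rv e))"
    using path_links_single[OF rv_in_E[OF e(1)], of og tm] og_rv[OF e(1)]
    by (intro path_links_append[OF path_links_single[OF e(1)]]) simp
  then show ?thesis using True e tm_rv by auto
qed (use strongly_connected in blast)

lemma DFE_sol_imp_tight:
  assumes sol: "DFE_sol V E og tm rv H a u"
  shows "DFE_subsol E og tm H a u"
    and "\<forall>x\<in>V. \<exists>e\<in>E. tm e = x \<and> u (og e) + sigma H a e \<le> u x"
proof -
  let ?F = "\<lambda>e. u (tm e) + sigma H a (rv e)" and ?T = "\<lambda>x. {e\<in>E. og e = x}"
  have fin: "finite (?F ` ?T x)" for x using finite_E by simp
  have u_eq: "x \<in> V \<Longrightarrow> u x = Min (?F ` ?T x)" for x using sol unfolding DFE_sol_def by blast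
  show "DFE_subsol E og tm H a u"
    unfolding DFE_subsol_def
  proof
    fix f assume f: "f \<in> E"
    have "u (tm f) \<le> ?F (rv f)"
      using u_eq[OF tm_in_V[OF f]] fin rv_in_E[OF f] og_rv[OF f] by (simp add: Min_le)
    then show "u (tm f) - u (og f) \<le> sigma H a f" using tm_rv[OF f] rv_rv[OF f] by simp
  qed
  show "\<forall>x\<in>V. \<exists>e\<in>E. tm e = x \<and> u (og e) + sigma H a e \<le> u x"
  proof
    fix x assume x: "x \<in> V"
    have "?T x \<noteq> {}" using x V_eq by auto
    then have "u x \<in> ?F ` ?T x" using u_eq[OF x] fin by (simp add: Min_in)
    then obtain e where "e \<in> E" "og e = x" "u x = ?F e" by auto
    then show "\<exists>e\<in>E. tm e = x \<and> u (og e) + sigma H a e \<le> u x"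
      using rv_in_E og_rv tm_rv rv_rv by (intro bexI[of _ "rv e"]) auto
  qed
qed

lemma tight_imp_DFE_sol:
  assumes sub: "DFE_subsol E og tm H a u"
    and tight: "\<forall>x\<in>V. \<exists>e\<in>E. tm e = x \<and> u (og e) + sigma H a e \<le> u x"
  shows "DFE_sol V E og tm rv H a u"
  unfolding DFE_sol_def
proof
  let ?F = "\<lambda>e. u (tm e) + sigma H a (rv e)" and ?T = "\<lambda>x. {e\<in>E. og e = x}"
  fix x assume x: "x \<in> V"
  have le: "u x \<le> ?F e" if "e \<in> ?T x" for e
    using sub that rv_in_E og_rv tm_rv unfolding DFE_subsol_def by fastforce
  obtain f where f: "f \<in> E" "tm f = x" "u (og f) + sigma H a f \<le> u x" using tight x by blast
  have rv_f: "rv f \<in> ?T x" using f rv_in_E og_rv by auto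
  moreover have "?F (rv f) = u x" using le[OF rv_f] f tm_rv rv_rv by simp
  ultimately show "u x = Min (?F ` ?T x)"
    using finite_E le by (intro Min_eqI[symmetric]) (auto intro: rev_image_eqI)
qed

lemma DFE_sol_iff:
  "DFE_sol V E og tm rv H a u \<longleftrightarrow> DFE_subsol E og tm H a u \<and>
     (\<forall>x\<in>V. \<exists>e\<in>E. tm e = x \<and> u (og e) + sigma H a e \<le> u x)"
  using DFE_sol_imp_tight tight_imp_DFE_sol by blast

lemma DFE_sol_Min:
  assumes "finite I" and "I \<noteq> {}" and sol: "\<And>i. i \<in> I \<Longrightarrow> DFE_sol V E og tm rv H a (f i)"
  shows "DFE_sol V E og tm rv H a (\<lambda>x. Min ((\<lambda>i. f i x) ` I))"
proof -
  let ?v = "\<lambda>x. Min ((\<lambda>i. f i x) ` I)"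
  have v_le: "i \<in> I \<Longrightarrow> ?v x \<le> f i x" for i x using assms(1) by simp
  have v_attained: "\<exists>i\<in>I. ?v x = f i x" for x
  proof -
    have "?v x \<in> (\<lambda>i. f i x) ` I" using assms(1,2) by (intro Min_in) auto
    then show ?thesis by auto
  qed
  have "DFE_subsol E og tm H a ?v"
    unfolding DFE_subsol_def
  proof
    fix e assume e: "e \<in> E"
    obtain i where i: "i \<in> I" "?v (og e) = f i (og e)" using v_attained by blast
    have "f i (tm e) - f i (og e) \<le> sigma H a e"
      using sol[OF i(1)] e unfolding DFE_sol_iff DFE_subsol_def by blast
    then show "?v (tm e) - ?v (og e) \<le> sigma H a e" using v_le[OF i(1), of "tm e"] i(2) by linarith
  qed
  moreover have "\<exists>e\<in>E. tm e = x \<and> ?v (og e) + sigma H a e \<le> ?v x" if x: "x \<in> V" for x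
  proof -
    obtain i where i: "i \<in> I" "?v x = f i x" using v_attained by blast
    then obtain e where e: "e \<in> E" "tm e = x" "f i (og e) + sigma H a e \<le> f i x"
      using sol[OF i(1)] x unfolding DFE_sol_iff by blast
    then have "?v (og e) + sigma H a e \<le> ?v x" using v_le[OF i(1), of "og e"] i(2) by linarith
    then show ?thesis using e(1,2) by blast
  qed
  ultimately show ?thesis unfolding DFE_sol_iff by blast
qed

lemma DFE_sol_add_const:
  "DFE_sol V E og tm rv H a u \<Longrightarrow> DFE_sol V E og tm rv H a (\<lambda>x. k + u x)"
  unfolding DFE_sol_iff DFE_subsol_def by auto

lemma tight_walk:
  assumes tight: "\<forall>x\<in>V. \<exists>e\<in>E. tm e = x \<and> u (og e) + sigma H a e \<le> u x" and "x \<in> V"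
  obtains X w where "X 0 = x"
    and "\<And>k. w k \<in> E \<and> tm (w k) = X k \<and> og (w k) = X (Suc k)"
    and "\<And>k. u (X (Suc k)) + sigma H a (w k) \<le> u (X k)"
proof -
  obtain nxt where nxt: "\<And>z. z \<in> V \<Longrightarrow> nxt z \<in> E \<and> tm (nxt z) = z \<and>
      u (og (nxt z)) + sigma H a (nxt z) \<le> u z"
    using bchoice[of V "\<lambda>z e. e \<in> E \<and> tm e = z \<and> u (og e) + sigma H a e \<le> u z"] tight
    by blast
  define X where "X k = ((og \<circ> nxt) ^^ k) x" for k
  have X_in_V: "X k \<in> V" for k
    by (induction k) (use \<open>x \<in> V\<close> nxt og_in_V in \<open>auto simp: X_def\<close>)
  show ?thesis
    using nxt[OF X_in_V] by (intro that[of X "\<lambda>k. nxt (X k)"]) (auto simp: X_def)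
qed

end

locale subsolvable_network = network_graph V E og tm rv H
  for V :: "'v set" and E :: "'e set" and og tm :: "'e \<Rightarrow> 'v" and rv :: "'e \<Rightarrow> 'e"
    and H :: "'e \<Rightarrow> real \<Rightarrow> real \<Rightarrow> real" +
  fixes a :: real
  assumes subsolvable: "\<exists>u. DFE_subsol E og tm H a u"
begin

abbreviation S :: "'v \<Rightarrow> 'v \<Rightarrow> real" where
  "S \<equiv> S_dist E og tm H a"

abbreviation A :: "'v set" where
  "A \<equiv> aubry V E og tm H a"

lemma S_dist_le_sigma_path: "path_links E og tm p x y \<Longrightarrow> S x y \<le> sigma_path H a p"
proof -
  assume p: "path_links E og tm p x y"
  obtain u where "DFE_subsol E og tm H a u" using subsolvable by blast
  then have "bdd_below {sigma_path H a q | q. path_links E og tm q x y}"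
    using subsol_le_sigma_path by (fastforce intro: bdd_belowI[where m = "u y - u x"])
  then show ?thesis unfolding S_dist_def using p by (auto intro: cInf_lower)
qed

lemma le_S_dist:
  assumes "x \<in> V" "y \<in> V" and "\<And>p. path_links E og tm p x y \<Longrightarrow> m \<le> sigma_path H a p"
  shows "m \<le> S x y"
  unfolding S_dist_def using ex_path_links[OF assms(1,2)] assms(3) by (intro cInf_greatest) auto

lemma subsol_le_S_dist:
  "DFE_subsol E og tm H a u \<Longrightarrow> x \<in> V \<Longrightarrow> y \<in> V \<Longrightarrow> u y - u x \<le> S x y"
  by (rule le_S_dist) (auto intro: subsol_le_sigma_path)

lemma S_dist_triangle_edge:
  assumes "y \<in> V" and "e \<in> E"
  shows "S y (tm e) \<le> S y (og e) + sigma H a e"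
proof -
  have "S y (tm e) - sigma H a e \<le> S y (og e)"
  proof (rule le_S_dist[OF assms(1) og_in_V[OF assms(2)]])
    fix p assume "path_links E og tm p y (og e)"
    then have "path_links E og tm (p @ [e]) y (tm e)"
      using path_links_append path_links_single assms(2) by fastforce
    then show "S y (tm e) - sigma H a e \<le> sigma_path H a p"
      using S_dist_le_sigma_path by (fastforce simp: sigma_path_def)
  qed
  then show ?thesis by simp
qed

lemma S_dist_aubry_self: "y \<in> A \<Longrightarrow> S y y = 0"
proof -
  assume y: "y \<in> A"
  then obtain xs where "is_cycle E og tm xs" "incident og tm xs y" "sigma_path H a xs = 0"
    unfolding aubry_def by blast
  then obtain ys where "path_links E og tm ys y y" "sigma_path H a ys = 0"
    using cycle_rotate_to_incident by metis
  then have "S y y \<le> 0" using S_dist_le_sigma_path by fastforce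
  moreover have "0 \<le> S y y"
    using subsolvable subsol_le_S_dist y aubry_subset by fastforce
  ultimately show ?thesis by simp
qed

text \<open>Splitting off the last edge of a path from \<open>y\<close>; the one-edge paths are covered by
  \<open>S y y = 0\<close>.\<close>

lemma S_dist_tight_edge:
  assumes y: "y \<in> A" and x: "x \<in> V"
  shows "\<exists>e\<in>E. tm e = x \<and> S y (og e) + sigma H a e \<le> S y x"
proof -
  define T where "T = {e\<in>E. tm e = x}"
  define F where "F e = S y (og e) + sigma H a e" for e
  have y_in_V: "y \<in> V" using y aubry_subset by blast
  have "finite T" using finite_E unfolding T_def by simp
  obtain p0 where "path_links E og tm p0 y x" using ex_path_links[OF y_in_V x] by blast
  then have "last p0 \<in> T" unfolding T_def path_links_iff by auto
  then have "Min (F ` T) \<in> F ` T" using \<open>finite T\<close> by (intro Min_in) auto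
  then obtain e where e: "e \<in> T" "F e = Min (F ` T)" by auto
  have "F e \<le> S y x"
  proof (rule le_S_dist[OF y_in_V x])
    fix p assume p: "path_links E og tm p y x"
    define q where "q = butlast p"
    define f where "f = last p"
    have pq: "p = q @ [f]" using p unfolding q_def f_def path_links_iff by simp
    have "f \<in> T" using p unfolding T_def f_def path_links_iff by auto
    then have "F e \<le> F f" using e \<open>finite T\<close> by simp
    also have "F f \<le> sigma_path H a p"
    proof (cases "q = []")
      case True
      then have "og f = y" using p pq by (simp add: path_links_iff)
      then show ?thesis using True pq S_dist_aubry_self[OF y] by (simp add: F_def sigma_path_def)
    next
      case False
      then have "path_links E og tm q y (og f)" using p pq path_links_snocD by metis
      then have "S y (og f) \<le> sigma_path H a q" by (rule S_dist_le_sigma_path)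
      then show ?thesis by (simp add: F_def pq sigma_path_def)
    qed
    finally show "F e \<le> sigma_path H a p" .
  qed
  then show ?thesis using e(1) unfolding T_def F_def by blast
qed

lemma DFE_sol_S_dist:
  assumes y: "y \<in> A"
  shows "DFE_sol V E og tm rv H a (S y)"
proof -
  have "y \<in> V" using y aubry_subset by blast
  then have "DFE_subsol E og tm H a (S y)"
    unfolding DFE_subsol_def using S_dist_triangle_edge by (simp add: algebra_simps)
  then show ?thesis unfolding DFE_sol_iff using S_dist_tight_edge[OF y] by blast
qed

lemma DFE_sol_ge_aubry:
  assumes sol: "DFE_sol V E og tm rv H a u" and x: "x \<in> V"
  shows "\<exists>z\<in>A. u z + S z x \<le> u x"
proof -
  have sub: "DFE_subsol E og tm H a u"
    and tight_edges: "\<forall>x\<in>V. \<exists>e\<in>E. tm e = x \<and> u (og e) + sigma H a e \<le> u x"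
    using sol unfolding DFE_sol_iff by blast+
  obtain X w where X0: "X 0 = x"
    and walk: "\<And>k. w k \<in> E \<and> tm (w k) = X k \<and> og (w k) = X (Suc k)"
    and tight: "\<And>k. u (X (Suc k)) + sigma H a (w k) \<le> u (X k)"
    using tight_walk[OF tight_edges x] by blast
  let ?seg = "\<lambda>i j. rev (map w [i..<j])"
  note seg = tight_walk_segment[where w = w and X = X, OF walk tight]
  have X_in_V: "X k \<in> V" for k
    using walk[of k] tm_in_V by metis
  then have "finite (range X)" by (intro finite_subset[OF _ finite_V]) blast
  then obtain i j where ij: "i < j" "X i = X j" by (rule finite_range_repeats)
  have loop: "path_links E og tm (?seg i j) (X i) (X i)"
    using seg(1)[OF ij(1)] ij(2) by simp
  have "sigma_path H a (?seg i j) = 0"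
    using seg(2)[OF ij(1)] subsol_le_sigma_path[OF sub loop] ij(2) by auto
  then have XiA: "X i \<in> A" by (rule zero_loop_in_aubry[OF loop _ X_in_V])
  show ?thesis
  proof (cases "i = 0")
    case True
    then show ?thesis using XiA X0 S_dist_aubry_self[OF XiA] by (intro bexI[of _ "X i"]) simp_all
  next
    case False
    then have path: "path_links E og tm (?seg 0 i) (X i) x"
      and weight: "sigma_path H a (?seg 0 i) \<le> u x - u (X i)"
      using seg[of 0 i] X0 by simp_all
    have "S (X i) x \<le> u x - u (X i)" using S_dist_le_sigma_path[OF path] weight by linarith
    then show ?thesis using XiA by (intro bexI[of _ "X i"]) simp_all
  qed
qed

lemma DFE_sol_eq_Min_aubry:
  assumes sol: "DFE_sol V E og tm rv H a u" and x: "x \<in> V"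
  shows "u x = Min ((\<lambda>z. u z + S z x) ` A)"
proof -
  have sub: "DFE_subsol E og tm H a u" using sol unfolding DFE_sol_iff by blast
  have le: "u x \<le> u z + S z x" if "z \<in> A" for z
    using subsol_le_S_dist[OF sub _ x, of z] that aubry_subset[of a] by auto
  obtain z where z: "z \<in> A" "u z + S z x \<le> u x" using DFE_sol_ge_aubry[OF sol x] by blast
  then have "u x = u z + S z x" using le[OF z(1)] by linarith
  then have "u x \<in> (\<lambda>z. u z + S z x) ` A" using z(1) by blast
  then show ?thesis using finite_aubry le by (intro Min_eqI[symmetric]) auto
qed

lemma aubry_extension_sol:
  assumes "A \<noteq> {}"
  shows "DFE_sol V E og tm rv H a (\<lambda>x. Min ((\<lambda>y. g y + S y x) ` A))"
proof (rule DFE_sol_Min[OF finite_aubry assms])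
  fix y assume "y \<in> A"
  then show "DFE_sol V E og tm rv H a (\<lambda>x. g y + S y x)"
    by (intro DFE_sol_add_const DFE_sol_S_dist)
qed

lemma aubry_extension_eq:
  assumes compat: "\<forall>x\<in>A. \<forall>y\<in>A. g x - g y \<le> S y x" and x: "x \<in> A"
  shows "Min ((\<lambda>y. g y + S y x) ` A) = g x"
proof (rule Min_eqI)
  show "finite ((\<lambda>y. g y + S y x) ` A)" using finite_aubry by simp
  show "g x \<le> r" if r: "r \<in> (\<lambda>y. g y + S y x) ` A" for r
  proof -
    obtain y where y: "y \<in> A" "r = g y + S y x" using r by blast
    have "g x - g y \<le> S y x" using compat x y(1) by blast
    then show ?thesis using y(2) by linarith
  qed
  show "g x \<in> (\<lambda>y. g y + S y x) ` A"
    by (rule rev_image_eqI[OF x]) (simp add: S_dist_aubry_self[OF x])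
qed

end

theorem theorem6p22:
  fixes V :: "'v set" and E :: "'e set" and og tm :: "'e \<Rightarrow> 'v" and rv :: "'e \<Rightarrow> 'e"
    and H :: "'e \<Rightarrow> real \<Rightarrow> real \<Rightarrow> real" and c :: real and g :: "'v \<Rightarrow> real"
  assumes net: "network V E og tm rv H"
    and crit: "critical_value E og tm H c"
    and ne: "aubry V E og tm H c \<noteq> {}"
    and g: "\<forall>x\<in>aubry V E og tm H c. \<forall>y\<in>aubry V E og tm H c.
              g x - g y \<le> S_dist E og tm H c y x"
  shows "DFE_sol V E og tm rv H c
           (\<lambda>x. Min ((\<lambda>y. g y + S_dist E og tm H c y x) ` aubry V E og tm H c))
       \<and> (\<forall>x\<in>aubry V E og tm H c.
           Min ((\<lambda>y. g y + S_dist E og tm H c y x) ` aubry V E og tm H c) = g x)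
       \<and> (\<forall>u. DFE_sol V E og tm rv H c u \<and> (\<forall>x\<in>aubry V E og tm H c. u x = g x) \<longrightarrow>
            (\<forall>x\<in>V. u x = Min ((\<lambda>y. g y + S_dist E og tm H c y x) ` aubry V E og tm H c)))"
proof -
  obtain u0 where "DFE_subsol E og tm H c u0" using crit unfolding critical_value_def by blast
  then interpret subsolvable_network V E og tm rv H c
    using net by unfold_locales blast+
  have unique: "u x = Min ((\<lambda>y. g y + S y x) ` A)"
    if sol: "DFE_sol V E og tm rv H c u" and on_A: "\<forall>y\<in>A. u y = g y" and x: "x \<in> V" for u x
  proof -
    have "(\<lambda>y. u y + S y x) ` A = (\<lambda>y. g y + S y x) ` A" by (rule image_cong) (simp_all add: on_A)
    then show ?thesis using DFE_sol_eq_Min_aubry[OF sol x] by simp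
  qed
  have "\<forall>x\<in>A. Min ((\<lambda>y. g y + S y x) ` A) = g x" using aubry_extension_eq[OF g] by blast
  moreover have "\<forall>u. DFE_sol V E og tm rv H c u \<and> (\<forall>x\<in>A. u x = g x) \<longrightarrow>
      (\<forall>x\<in>V. u x = Min ((\<lambda>y. g y + S y x) ` A))"
    using unique by blast
  ultimately show ?thesis using aubry_extension_sol[OF ne] by blast
qed

end
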